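(* Let $p$ be a prime, $X$ a compact space, and $q\in\mathbb{N}$ a prime different from $p$. Then for all $f,g\in C(X,\mathbb{Q}_p)$: $g|^*f$ if and only if there exists $h\in C(X,\mathbb{Q}_p)$ with $h^q=g^q+pf^q$.
   Context: $C(X,\mathbb{Q}_p)$ is the ring of continuous functions $X\to\mathbb{Q}_p$. The canonical $p$-adic divisibility $|^*$ on it is defined by $g|^*f\Leftrightarrow v_p(g(x))\le v_p(f(x))$ for all $x\in X$, where $v_p$ is the $p$-adic valuation (with $v_p(0)=\infty$). *)

theory Defs
  imports "HOL-Computational_Algebra.Computational_Algebra" "HOL-Library.Extended_Real"
begin

definition rat_vp :: "nat \<Rightarrow> rat \<Rightarrow> int" where
  "rat_vp p r = (case quotient_of r of (a, b) \<Rightarrow>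
      int (multiplicity (int p) a) - int (multiplicity (int p) b))"

definition rat_vge :: "nat \<Rightarrow> rat \<Rightarrow> int \<Rightarrow> bool" where
  "rat_vge p r n \<longleftrightarrow> r = 0 \<or> rat_vp p r \<ge> n"

definition padic_cauchy :: "nat \<Rightarrow> (nat \<Rightarrow> rat) \<Rightarrow> bool" where
  "padic_cauchy p s \<longleftrightarrow> (\<forall>n::int. \<exists>N. \<forall>m\<ge>N. \<forall>k\<ge>N. rat_vge p (s m - s k) n)"

definition padic_null :: "nat \<Rightarrow> (nat \<Rightarrow> rat) \<Rightarrow> bool" where
  "padic_null p s \<longleftrightarrow> (\<forall>n::int. \<exists>N. \<forall>m\<ge>N. rat_vge p (s m) n)"

definition padic_rel :: "nat \<Rightarrow> ((nat \<Rightarrow> rat) \<times> (nat \<Rightarrow> rat)) set" where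
  "padic_rel p = {(s, t). padic_cauchy p s \<and> padic_cauchy p t \<and> padic_null p (\<lambda>n. s n - t n)}"

type_synonym qp = "(nat \<Rightarrow> rat) set"

text \<open>The field Q_p: the completion of Q w.r.t. the p-adic absolute value,
  as equivalence classes of p-adic Cauchy sequences.\<close>
definition Qp :: "nat \<Rightarrow> qp set" where
  "Qp p = {s. padic_cauchy p s} // padic_rel p"

definition qp_of_rat :: "nat \<Rightarrow> rat \<Rightarrow> qp" where
  "qp_of_rat p r = padic_rel p `` {\<lambda>_. r}"

definition qp_add :: "nat \<Rightarrow> qp \<Rightarrow> qp \<Rightarrow> qp" where
  "qp_add p x y = \<Union>{padic_rel p `` {\<lambda>n. s n + t n} | s t. s \<in> x \<and> t \<in> y}"

definition qp_mult :: "nat \<Rightarrow> qp \<Rightarrow> qp \<Rightarrow> qp" where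
  "qp_mult p x y = \<Union>{padic_rel p `` {\<lambda>n. s n * t n} | s t. s \<in> x \<and> t \<in> y}"

definition qp_neg :: "nat \<Rightarrow> qp \<Rightarrow> qp" where
  "qp_neg p x = \<Union>{padic_rel p `` {\<lambda>n. - s n} | s. s \<in> x}"

definition qp_pow :: "nat \<Rightarrow> qp \<Rightarrow> nat \<Rightarrow> qp" where
  "qp_pow p x k = (qp_mult p x ^^ k) (qp_of_rat p 1)"

definition qp_val :: "nat \<Rightarrow> qp \<Rightarrow> ereal" where
  "qp_val p x = (if x = qp_of_rat p 0 then \<infinity>
     else ereal (of_int (THE v. \<exists>s\<in>x. \<exists>N. \<forall>n\<ge>N. s n \<noteq> 0 \<and> rat_vp p (s n) = v)))"

definition qp_continuous :: "nat \<Rightarrow> ('a::topological_space \<Rightarrow> qp) \<Rightarrow> bool" where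
  "qp_continuous p f \<longleftrightarrow> (\<forall>x. f x \<in> Qp p) \<and>
     (\<forall>x (n::int). \<exists>U. open U \<and> x \<in> U \<and>
        (\<forall>y\<in>U. qp_val p (qp_add p (f y) (qp_neg p (f x))) \<ge> ereal (of_int n)))"

definition padic_dvd_star :: "nat \<Rightarrow> ('a \<Rightarrow> qp) \<Rightarrow> ('a \<Rightarrow> qp) \<Rightarrow> bool" where
  "padic_dvd_star p g f \<longleftrightarrow> (\<forall>x. qp_val p (g x) \<le> qp_val p (f x))"

end

theory Submission
  imports Defs
begin

text \<open>If \<open>v\<^sub>p(g) \<le> v\<^sub>p(f)\<close>, then \<open>g\<^sup>q + p f\<^sup>q = g\<^sup>q (1 + p (f/g)\<^sup>q)\<close> and the principal
  unit \<open>1 + p (f/g)\<^sup>q\<close> has a unique \<open>q\<close>-th root \<open>\<equiv> 1 (mod p)\<close> by Hensel's lemma, because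
  \<open>p\<close> does not divide \<open>q\<close>; the root \<open>h\<close> of \<open>g\<^sup>q + p f\<^sup>q\<close> with \<open>h \<equiv> g\<close> modulo higher order is then continuous, since
  \<open>h \<mapsto> h\<^sup>q\<close> changes valuations of differences near \<open>h \<noteq> 0\<close> only by a bounded amount, and
  \<open>h\<close> is small wherever \<open>f\<close> and \<open>g\<close> are. Conversely, if \<open>v\<^sub>p(g) > v\<^sub>p(f)\<close> at some point,
  then \<open>v\<^sub>p(g\<^sup>q + p f\<^sup>q) = q v\<^sub>p(f) + 1\<close> is not divisible by \<open>q\<close>, so there is no \<open>q\<close>-th root.

  Elements of \<open>Qp\<close> are classes of rational Cauchy sequences, so the roots are built on
  representatives: at index \<open>k\<close> one takes a rational root to precision \<open>k\<close>.\<close>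

section \<open>The \<open>p\<close>-adic valuation on \<open>\<rat>\<close>\<close>

lemma ereal_le_iff_of_int_le:
  fixes A B :: ereal
  assumes "A = \<infinity> \<or> (\<exists>k::int. A = ereal (of_int k))"
  shows "A \<le> B \<longleftrightarrow> (\<forall>n::int. ereal (of_int n) \<le> A \<longrightarrow> ereal (of_int n) \<le> B)"
proof (intro iffI allI impI)
  assume le: "\<forall>n::int. ereal (of_int n) \<le> A \<longrightarrow> ereal (of_int n) \<le> B"
  show "A \<le> B"
  proof (cases "A = \<infinity>")
    case True
    hence B: "ereal (of_int n) \<le> B" for n using le by simp
    have "B = \<infinity>"
    proof (cases B)
      case (real r)
      thus ?thesis using B[of "\<lceil>r\<rceil> + 1"] le_of_int_ceiling[of r] by simp
    qed (use B[of 0] in simp_all)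
    thus ?thesis by simp
  qed (use assms le in auto)
qed auto

lemma qp_val_cases: "qp_val p x = \<infinity> \<or> (\<exists>k::int. qp_val p x = ereal (of_int k))"
  unfolding qp_val_def by auto

locale padic =
  fixes p :: nat
  assumes prime_p: "prime p"
begin

abbreviation vge :: "rat \<Rightarrow> int \<Rightarrow> bool" where
  "vge x n \<equiv> rat_vge p x n"

definition vp_int :: "int \<Rightarrow> int" where
  "vp_int a = int (multiplicity (int p) a)"

lemma prime_int_p: "prime (int p)"
  using prime_p by simp

lemma vp_int_mult: "a \<noteq> 0 \<Longrightarrow> b \<noteq> 0 \<Longrightarrow> vp_int (a * b) = vp_int a + vp_int b"
  unfolding vp_int_def using prime_int_p by (simp add: prime_elem_multiplicity_mult_distrib)

lemma rat_obtain_frac: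
  fixes x :: rat
  obtains a b where "b \<noteq> 0" "x = of_int a / of_int b"
proof -
  obtain a b where q: "quotient_of x = (a, b)" by (cases "quotient_of x")
  show ?thesis
    by (rule that) (use quotient_of_denom_pos[OF q] quotient_of_div[OF q] in auto)
qed

lemma rat_vp_frac:
  assumes "a \<noteq> 0" "b \<noteq> 0"
  shows "rat_vp p (of_int a / of_int b) = vp_int a - vp_int b"
proof -
  obtain a' b' where q: "quotient_of (of_int a / of_int b) = (a', b')"
    by (cases "quotient_of (of_int a / of_int b)")
  have eq: "(of_int a / of_int b :: rat) = of_int a' / of_int b'" using quotient_of_div[OF q] .
  have "b' \<noteq> 0" using quotient_of_denom_pos[OF q] by simp
  moreover from this have "a' \<noteq> 0" using eq assms by auto
  moreover have "(of_int (a * b') :: rat) = of_int (a' * b)"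
    using eq assms \<open>b' \<noteq> 0\<close> by (simp add: field_simps)
  hence "a * b' = a' * b" by (simp only: of_int_eq_iff)
  ultimately have "vp_int a + vp_int b' = vp_int a' + vp_int b"
    using vp_int_mult assms by metis
  thus ?thesis unfolding rat_vp_def q vp_int_def by simp
qed

lemma rat_vp_of_int: "k \<noteq> 0 \<Longrightarrow> rat_vp p (of_int k) = vp_int k"
  using rat_vp_frac[of k 1] by (simp add: vp_int_def)

lemma rat_vp_mult:
  assumes "x \<noteq> 0" "y \<noteq> 0"
  shows "rat_vp p (x * y) = rat_vp p x + rat_vp p y"
proof -
  obtain a b where ab: "b \<noteq> 0" "x = of_int a / of_int b" by (rule rat_obtain_frac)
  obtain c d where cd: "d \<noteq> 0" "y = of_int c / of_int d" by (rule rat_obtain_frac)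
  have "a \<noteq> 0" "c \<noteq> 0" using assms ab cd by auto
  have "x * y = of_int (a * c) / of_int (b * d)" using ab cd by simp
  thus ?thesis
    using rat_vp_frac[of "a * c" "b * d"] rat_vp_frac[of a b] rat_vp_frac[of c d] vp_int_mult
      ab cd \<open>a \<noteq> 0\<close> \<open>c \<noteq> 0\<close> by simp
qed

lemma rat_vp_1: "rat_vp p 1 = 0"
  using rat_vp_of_int[of 1] by (simp add: vp_int_def)

lemma rat_vp_minus: "rat_vp p (- x) = rat_vp p x"
proof (cases "x = 0")
  case False
  obtain a b where ab: "b \<noteq> 0" "x = of_int a / of_int b" by (rule rat_obtain_frac)
  have "a \<noteq> 0" using False ab by auto
  have "- x = of_int (- a) / of_int b" using ab by simp
  thus ?thesis using rat_vp_frac[of "- a" b] rat_vp_frac[of a b] ab \<open>a \<noteq> 0\<close>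
    by (simp add: vp_int_def multiplicity_uminus_right)
qed simp

lemma rat_vp_power: "x \<noteq> 0 \<Longrightarrow> rat_vp p (x ^ k) = int k * rat_vp p x"
  by (induction k) (auto simp: rat_vp_1 rat_vp_mult algebra_simps)

lemma rat_vp_inverse: "x \<noteq> 0 \<Longrightarrow> rat_vp p (inverse x) = - rat_vp p x"
  using rat_vp_mult[of x "inverse x"] rat_vp_1 by simp

lemma rat_vp_p: "rat_vp p (of_nat p) = 1"
  using rat_vp_of_int[of "int p"] prime_p prime_int_p
  by (simp add: vp_int_def multiplicity_prime)

lemma rat_vp_of_nat_coprime: "\<not> p dvd n \<Longrightarrow> rat_vp p (of_nat n) = 0"
  using rat_vp_of_int[of "int n"] by (auto simp: vp_int_def not_dvd_imp_multiplicity_0)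

text \<open>Over a common denominator, the ultrametric inequality says that a power of \<open>p\<close>
  dividing two integers divides their sum.\<close>
lemma vge_add:
  assumes "vge x n" "vge y n"
  shows "vge (x + y) n"
proof (cases "x = 0 \<or> y = 0 \<or> x + y = 0")
  case True
  thus ?thesis using assms unfolding rat_vge_def by auto
next
  case False
  obtain a b where ab: "b \<noteq> 0" "x = of_int a / of_int b" by (rule rat_obtain_frac)
  obtain c d where cd: "d \<noteq> 0" "y = of_int c / of_int d" by (rule rat_obtain_frac)
  have a: "a \<noteq> 0" and c: "c \<noteq> 0" using False ab cd by auto
  have sum: "x + y = of_int (a * d + c * b) / of_int (b * d)" using ab cd by (simp add: field_simps)
  hence s: "a * d + c * b \<noteq> 0" using False by (metis div_0 of_int_0)
  have "n \<le> vp_int a - vp_int b" "n \<le> vp_int c - vp_int d"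
    using assms False rat_vp_frac a c ab cd unfolding rat_vge_def by auto
  hence ad: "n + vp_int b + vp_int d \<le> vp_int (a * d)" and cb: "n + vp_int b + vp_int d \<le> vp_int (c * b)"
    using vp_int_mult a c ab cd by auto
  have "n + vp_int b + vp_int d \<le> vp_int (a * d + c * b)"
  proof (cases "n + vp_int b + vp_int d \<le> 0")
    case False
    define t where "t = nat (n + vp_int b + vp_int d)"
    have "int p ^ t dvd a * d" "int p ^ t dvd c * b"
      using ad cb False unfolding t_def vp_int_def by (auto intro: multiplicity_dvd')
    hence "int p ^ t dvd a * d + c * b" by simp
    hence "t \<le> multiplicity (int p) (a * d + c * b)"
      using s prime_int_p by (intro multiplicity_geI) (auto simp: not_prime_unit)
    thus ?thesis using False unfolding t_def vp_int_def by simp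
  qed (simp add: vp_int_def)
  moreover have "rat_vp p (x + y) = vp_int (a * d + c * b) - vp_int (b * d)"
    unfolding sum by (rule rat_vp_frac[OF s]) (use ab cd in simp)
  ultimately show ?thesis
    unfolding rat_vge_def using vp_int_mult ab cd by simp
qed

lemma vge_0 [simp]: "vge 0 n"
  unfolding rat_vge_def by simp

lemma vge_mono: "vge x n \<Longrightarrow> m \<le> n \<Longrightarrow> vge x m"
  unfolding rat_vge_def by auto

lemma vge_minus [simp]: "vge (- x) n \<longleftrightarrow> vge x n"
  unfolding rat_vge_def by (simp add: rat_vp_minus)

lemma vge_diff: "vge x n \<Longrightarrow> vge y n \<Longrightarrow> vge (x - y) n"
  using vge_add[of x n "- y"] by simp

lemma vge_diff_commute: "vge (x - y) n \<longleftrightarrow> vge (y - x) n"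
  using vge_minus[of "x - y" n] by simp

lemma vge_mult: "vge x n \<Longrightarrow> vge y m \<Longrightarrow> vge (x * y) (n + m)"
  unfolding rat_vge_def by (cases "x = 0 \<or> y = 0") (auto simp: rat_vp_mult)

lemma vge_power: "vge (x ^ k) (int k * n)" if "vge x n"
proof (cases "x = 0")
  case True
  thus ?thesis by (cases k) (auto simp: rat_vge_def rat_vp_1)
next
  case False
  thus ?thesis using that unfolding rat_vge_def by (auto simp: rat_vp_power mult_left_mono)
qed

lemma vge_divide: "vge x n \<Longrightarrow> y \<noteq> 0 \<Longrightarrow> vge (x / y) (n - rat_vp p y)"
  unfolding rat_vge_def divide_inverse
  by (cases "x = 0") (auto simp: rat_vp_mult rat_vp_inverse)

lemma vge_rat_vp: "x \<noteq> 0 \<Longrightarrow> vge x (rat_vp p x)"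
  unfolding rat_vge_def by simp

lemma vge_of_int [simp]: "vge (of_int k) 0"
  unfolding rat_vge_def by (cases "k = 0") (auto simp: rat_vp_of_int vp_int_def)

lemma vge_of_nat [simp]: "vge (of_nat k) 0"
  using vge_of_int[of "int k"] by simp

lemma vge_1 [simp]: "vge 1 0"
  using vge_of_int[of 1] by simp

lemma vge_p [simp]: "vge (of_nat p) 1"
  using rat_vp_p unfolding rat_vge_def by simp

lemma vge_of_nat_p_mult: "vge x n \<Longrightarrow> vge (of_nat p * x) n"
  using vge_mult[OF vge_p, of x n] vge_mono by fastforce

lemma vge_0_of_vge_diff_1: "vge (x - 1) 1 \<Longrightarrow> vge x 0"
  using vge_add[OF vge_mono[of "x - 1" 1 0] vge_1] by simp

lemma rat_vp_add_eq:
  assumes "x \<noteq> 0" "vge y (rat_vp p x + 1)"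
  shows "x + y \<noteq> 0 \<and> rat_vp p (x + y) = rat_vp p x"
proof (rule ccontr)
  have "vge (x + y) (rat_vp p x)"
    using vge_add[OF vge_rat_vp[OF assms(1)] vge_mono[OF assms(2)]] by simp
  moreover assume "\<not> ?thesis"
  ultimately have "vge (x + y) (rat_vp p x + 1)" unfolding rat_vge_def by auto
  hence "vge (x + y - y) (rat_vp p x + 1)" using vge_diff assms(2) by blast
  thus False using assms(1) unfolding rat_vge_def by simp
qed

lemma vge_of_vge_power:
  assumes "vge (x ^ q) (int q * n)" "q > 0"
  shows "vge x n"
  using assms unfolding rat_vge_def by (cases "x = 0") (auto simp: rat_vp_power)

section \<open>\<open>p\<close>-adic Cauchy sequences\<close>

abbreviation cauchy :: "(nat \<Rightarrow> rat) \<Rightarrow> bool" where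
  "cauchy s \<equiv> padic_cauchy p s"

abbreviation null :: "(nat \<Rightarrow> rat) \<Rightarrow> bool" where
  "null s \<equiv> padic_null p s"

abbreviation lim_vge :: "(nat \<Rightarrow> rat) \<Rightarrow> int \<Rightarrow> bool" where
  "lim_vge s n \<equiv> \<forall>\<^sub>F k in sequentially. vge (s k) n"

abbreviation lim_vp_eq :: "(nat \<Rightarrow> rat) \<Rightarrow> int \<Rightarrow> bool" where
  "lim_vp_eq s v \<equiv> \<forall>\<^sub>F k in sequentially. s k \<noteq> 0 \<and> rat_vp p (s k) = v"

lemma null_iff_lim_vge: "null s \<longleftrightarrow> (\<forall>n. lim_vge s n)"
  unfolding padic_null_def eventually_sequentially by simp

lemma lim_vge_of_lim_vp_eq: "lim_vp_eq s v \<Longrightarrow> lim_vge s v"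
  by (erule eventually_mono) (auto simp: rat_vge_def)

lemma lim_vge_le_of_lim_vp_eq:
  assumes "lim_vp_eq s v" "lim_vge s n"
  shows "n \<le> v"
proof -
  from assms have "\<forall>\<^sub>F k in sequentially. n \<le> v" by eventually_elim (simp add: rat_vge_def)
  thus ?thesis by simp
qed

lemma lim_vge_add:
  assumes "lim_vge s n" "lim_vge t n"
  shows "lim_vge (\<lambda>k. s k + t k) n"
  using assms by eventually_elim (simp add: vge_add)

lemma lim_vge_mono: "lim_vge s n \<Longrightarrow> m \<le> n \<Longrightarrow> lim_vge s m"
  by (auto elim: eventually_mono intro: vge_mono)

lemma cauchy_const: "cauchy (\<lambda>k. c)"
  unfolding padic_cauchy_def by simp

lemma cauchy_bounded:
  assumes "cauchy s"
  obtains B where "lim_vge s B"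
proof -
  obtain N where N: "\<forall>m\<ge>N. \<forall>k\<ge>N. vge (s m - s k) 0"
    using assms unfolding padic_cauchy_def by blast
  define B where "B = (if s N = 0 then 0 else min 0 (rat_vp p (s N)))"
  have "vge (s N) B" "B \<le> 0" unfolding B_def rat_vge_def by auto
  hence "vge (s m - s N + s N) B" if "m \<ge> N" for m
    using N that by (blast intro: vge_add vge_mono)
  thus ?thesis using that[of B] unfolding eventually_sequentially by auto
qed

lemma cauchy_add:
  assumes "cauchy s" "cauchy t"
  shows "cauchy (\<lambda>k. s k + t k)"
  unfolding padic_cauchy_def
proof
  fix n
  obtain N1 where "\<forall>m\<ge>N1. \<forall>k\<ge>N1. vge (s m - s k) n"
    using assms(1) unfolding padic_cauchy_def by blast
  moreover obtain N2 where "\<forall>m\<ge>N2. \<forall>k\<ge>N2. vge (t m - t k) n"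
    using assms(2) unfolding padic_cauchy_def by blast
  ultimately have "vge ((s m - s k) + (t m - t k)) n" if "m \<ge> max N1 N2" "k \<ge> max N1 N2" for m k
    using that by (simp add: vge_add)
  thus "\<exists>N. \<forall>m\<ge>N. \<forall>k\<ge>N. vge (s m + t m - (s k + t k)) n"
    by (metis (no_types, lifting) add_diff_add)
qed

lemma cauchy_minus: "cauchy s \<Longrightarrow> cauchy (\<lambda>k. - s k)"
  using vge_minus[of "s _ - s _"] unfolding padic_cauchy_def by (simp add: algebra_simps)

lemma cauchy_diff: "cauchy s \<Longrightarrow> cauchy t \<Longrightarrow> cauchy (\<lambda>k. s k - t k)"
  using cauchy_add[of s "\<lambda>k. - t k"] cauchy_minus[of t] by simp

lemma cauchy_mult:
  assumes "cauchy s" "cauchy t"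
  shows "cauchy (\<lambda>k. s k * t k)"
  unfolding padic_cauchy_def
proof
  fix n
  obtain B1 B2 where B: "lim_vge s B1" "lim_vge t B2"
    using cauchy_bounded assms by metis
  obtain M where M: "\<forall>k\<ge>M. vge (s k) B1 \<and> vge (t k) B2"
    using eventually_conj[OF B] unfolding eventually_sequentially by blast
  obtain N1 where N1: "\<forall>m\<ge>N1. \<forall>k\<ge>N1. vge (s m - s k) (n - B2)"
    using assms(1) unfolding padic_cauchy_def by blast
  obtain N2 where N2: "\<forall>m\<ge>N2. \<forall>k\<ge>N2. vge (t m - t k) (n - B1)"
    using assms(2) unfolding padic_cauchy_def by blast
  have "vge (s m * t m - s k * t k) n" if "m \<ge> max M (max N1 N2)" "k \<ge> max M (max N1 N2)" for m k
  proof -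
    have "vge ((s m - s k) * t m) (n - B2 + B2)" by (rule vge_mult) (use M N1 that in auto)
    moreover have "vge (s k * (t m - t k)) (B1 + (n - B1))"
      by (rule vge_mult) (use M N2 that in auto)
    ultimately have "vge ((s m - s k) * t m + s k * (t m - t k)) n" using vge_add by simp
    thus ?thesis by (simp add: algebra_simps)
  qed
  thus "\<exists>N. \<forall>m\<ge>N. \<forall>k\<ge>N. vge (s m * t m - s k * t k) n" by blast
qed

lemma cauchy_power: "cauchy s \<Longrightarrow> cauchy (\<lambda>k. s k ^ i)"
  by (induction i) (auto simp: cauchy_const intro: cauchy_mult)

lemma cauchy_inverse:
  assumes "cauchy s" "lim_vp_eq s v"
  shows "cauchy (\<lambda>k. inverse (s k))"
  unfolding padic_cauchy_def
proof
  fix n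
  obtain M where M: "\<forall>k\<ge>M. s k \<noteq> 0 \<and> rat_vp p (s k) = v"
    using assms(2) unfolding eventually_sequentially by blast
  obtain N where N: "\<forall>m\<ge>N. \<forall>k\<ge>N. vge (s k - s m) (n + 2 * v)"
    using assms(1) unfolding padic_cauchy_def by blast
  have "vge (inverse (s m) - inverse (s k)) n" if "m \<ge> max M N" "k \<ge> max M N" for m k
  proof -
    have nz: "s m \<noteq> 0" "s k \<noteq> 0" and "rat_vp p (s m * s k) = 2 * v"
      using M that rat_vp_mult by auto
    moreover have "inverse (s m) - inverse (s k) = (s k - s m) / (s m * s k)"
      using nz by (simp add: field_simps)
    ultimately show ?thesis using vge_divide[of "s k - s m" "n + 2 * v" "s m * s k"] N that by simp
  qed
  thus "\<exists>N. \<forall>m\<ge>N. \<forall>k\<ge>N. vge (inverse (s m) - inverse (s k)) n" by blast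
qed

lemma cauchy_lim_vp_eq:
  assumes "cauchy s" "\<not> null s"
  obtains v where "lim_vp_eq s v"
proof -
  obtain n where n: "\<forall>N. \<exists>m\<ge>N. \<not> vge (s m) n"
    using assms(2) unfolding padic_null_def by blast
  obtain N where N: "\<forall>m\<ge>N. \<forall>k\<ge>N. vge (s k - s m) n"
    using assms(1) unfolding padic_cauchy_def by blast
  obtain m where m: "m \<ge> N" "\<not> vge (s m) n" using n by blast
  hence sm: "s m \<noteq> 0" "rat_vp p (s m) < n" unfolding rat_vge_def by auto
  have "s k \<noteq> 0 \<and> rat_vp p (s k) = rat_vp p (s m)" if "k \<ge> N" for k
  proof -
    have "vge (s k - s m) (rat_vp p (s m) + 1)" using N that m(1) vge_mono sm(2) by fastforce
    from rat_vp_add_eq[OF sm(1) this] show ?thesis by simp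
  qed
  thus ?thesis using that[of "rat_vp p (s m)"] unfolding eventually_sequentially by auto
qed

lemma null_add: "null s \<Longrightarrow> null t \<Longrightarrow> null (\<lambda>k. s k + t k)"
  unfolding null_iff_lim_vge by (blast intro: lim_vge_add)

lemma null_minus: "null (\<lambda>k. - s k) \<longleftrightarrow> null s"
  unfolding padic_null_def by simp

lemma null_diff_commute: "null (\<lambda>k. s k - t k) \<longleftrightarrow> null (\<lambda>k. t k - s k)"
  using null_minus[of "\<lambda>k. s k - t k"] by simp

lemma null_mult:
  assumes "null s" "lim_vge t B"
  shows "null (\<lambda>k. s k * t k)"
  unfolding null_iff_lim_vge
proof
  fix n
  have "lim_vge s (n - B)" using assms(1) unfolding null_iff_lim_vge by blast
  with assms(2) show "lim_vge (\<lambda>k. s k * t k) n"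
    by eventually_elim (use vge_mult in fastforce)
qed

lemma null_power:
  assumes "null s" "i > 0"
  shows "null (\<lambda>k. s k ^ i)"
  unfolding null_iff_lim_vge
proof
  fix n
  have "lim_vge s (max n 0)" using assms(1) unfolding null_iff_lim_vge by blast
  moreover have "n \<le> int i * max n 0"
    using assms(2) mult_right_mono[of 1 "int i" "max n 0"] by linarith
  ultimately show "lim_vge (\<lambda>k. s k ^ i) n"
    by (auto elim: eventually_mono intro: vge_mono[OF vge_power])
qed

lemma lim_vp_eq_unique:
  assumes "null (\<lambda>k. s k - t k)" "lim_vp_eq s v" "lim_vp_eq t w"
  shows "v = w"
proof -
  have "lim_vge (\<lambda>k. s k - t k) (v + 1)" using assms(1) unfolding null_iff_lim_vge by blast
  with assms(2,3) have "\<forall>\<^sub>F k in sequentially. v = w"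
  proof eventually_elim
    case (elim k)
    hence "vge (t k - s k) (rat_vp p (s k) + 1)" by (simp add: vge_diff_commute)
    from rat_vp_add_eq[OF _ this] elim show ?case by simp
  qed
  thus ?thesis by simp
qed

section \<open>Elements of \<open>Qp\<close> as classes of Cauchy sequences\<close>

definition cls :: "(nat \<Rightarrow> rat) \<Rightarrow> qp" where
  "cls s = padic_rel p `` {s}"

lemma equiv_padic_rel: "equiv {s. cauchy s} (padic_rel p)"
proof (rule equivI)
  show "padic_rel p \<subseteq> {s. cauchy s} \<times> {s. cauchy s}"
    unfolding padic_rel_def by auto
  show "refl_on {s. cauchy s} (padic_rel p)"
    unfolding refl_on_def padic_rel_def padic_null_def by auto
  show "sym (padic_rel p)"
    unfolding sym_def padic_rel_def using null_diff_commute by blast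
  show "trans (padic_rel p)"
    unfolding trans_def padic_rel_def using null_add by fastforce
qed

lemma Qp_obtain_cls:
  assumes "x \<in> Qp p"
  obtains s where "cauchy s" "x = cls s"
  using assms unfolding Qp_def cls_def by (auto elim: quotientE)

lemma cls_in_Qp: "cauchy s \<Longrightarrow> cls s \<in> Qp p"
  unfolding Qp_def cls_def by (auto intro: quotientI)

lemma cls_eq_iff: "cauchy s \<Longrightarrow> cauchy t \<Longrightarrow> cls s = cls t \<longleftrightarrow> null (\<lambda>k. s k - t k)"
  unfolding cls_def using eq_equiv_class_iff[OF equiv_padic_rel] unfolding padic_rel_def by auto

lemma mem_cls_iff: "t \<in> cls s \<longleftrightarrow> cauchy s \<and> cauchy t \<and> null (\<lambda>k. s k - t k)"
  unfolding cls_def padic_rel_def by auto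

lemma cls_self: "cauchy s \<Longrightarrow> s \<in> cls s"
  unfolding mem_cls_iff padic_null_def by simp

lemma qp_of_rat_eq_cls: "qp_of_rat p r = cls (\<lambda>k. r)"
  unfolding qp_of_rat_def cls_def ..

lemma Union_eq_member: "(\<And>Y. Y \<in> A \<Longrightarrow> Y = X) \<Longrightarrow> X \<in> A \<Longrightarrow> \<Union>A = X"
  by blast

lemma Image_eq_cls: "cauchy s \<Longrightarrow> cauchy t \<Longrightarrow> null (\<lambda>k. s k - t k) \<Longrightarrow> padic_rel p `` {t} = cls s"
  using cls_eq_iff[of s t] unfolding cls_def by simp

text \<open>The operations on \<open>Qp\<close> are defined by unions over all representatives;
  such a union collapses to a single class as soon as the operation respects \<open>padic_rel\<close>.\<close>
lemma Union_cls_binop: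
  fixes F :: "(nat \<Rightarrow> rat) \<Rightarrow> (nat \<Rightarrow> rat) \<Rightarrow> nat \<Rightarrow> rat"
  assumes "cauchy s" "cauchy t"
    and "\<And>s' t'. s' \<in> cls s \<Longrightarrow> t' \<in> cls t \<Longrightarrow> cauchy (F s' t') \<and> null (\<lambda>k. F s t k - F s' t' k)"
  shows "\<Union>{padic_rel p `` {F s' t'} | s' t'. s' \<in> cls s \<and> t' \<in> cls t} = cls (F s t)"
proof (rule Union_eq_member)
  have self: "s \<in> cls s" "t \<in> cls t"
    using assms(1,2) by (auto intro: cls_self)
  hence "cauchy (F s t)" using assms(3) by blast
  show "Y = cls (F s t)"
    if Y: "Y \<in> {padic_rel p `` {F s' t'} | s' t'. s' \<in> cls s \<and> t' \<in> cls t}" for Y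
  proof -
    obtain s' t' where "Y = padic_rel p `` {F s' t'}" "s' \<in> cls s" "t' \<in> cls t"
      using Y by blast
    thus ?thesis using Image_eq_cls[of "F s t" "F s' t'"] assms(3) \<open>cauchy (F s t)\<close> by simp
  qed
  show "cls (F s t) \<in> {padic_rel p `` {F s' t'} | s' t'. s' \<in> cls s \<and> t' \<in> cls t}"
    using self unfolding cls_def by blast
qed

lemma qp_add_cls:
  assumes "cauchy s" "cauchy t"
  shows "qp_add p (cls s) (cls t) = cls (\<lambda>k. s k + t k)"
  unfolding qp_add_def
proof (rule Union_cls_binop[OF assms])
  fix s' t' assume "s' \<in> cls s" "t' \<in> cls t"
  hence "cauchy s'" "cauchy t'" "null (\<lambda>k. (s k - s' k) + (t k - t' k))"
    unfolding mem_cls_iff by (auto intro: null_add)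
  thus "cauchy (\<lambda>k. s' k + t' k) \<and> null (\<lambda>k. s k + t k - (s' k + t' k))"
    by (simp add: cauchy_add algebra_simps)
qed

lemma qp_mult_cls:
  assumes "cauchy s" "cauchy t"
  shows "qp_mult p (cls s) (cls t) = cls (\<lambda>k. s k * t k)"
  unfolding qp_mult_def
proof (rule Union_cls_binop[OF assms])
  fix s' t' assume "s' \<in> cls s" "t' \<in> cls t"
  hence s': "cauchy s'" "null (\<lambda>k. s k - s' k)" and t': "cauchy t'" "null (\<lambda>k. t k - t' k)"
    unfolding mem_cls_iff by auto
  obtain B B' where "lim_vge t B" "lim_vge s' B'"
    using cauchy_bounded assms(2) s'(1) by metis
  hence "null (\<lambda>k. (s k - s' k) * t k + (t k - t' k) * s' k)"
    using s'(2) t'(2) by (intro null_add null_mult)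
  thus "cauchy (\<lambda>k. s' k * t' k) \<and> null (\<lambda>k. s k * t k - s' k * t' k)"
    using s'(1) t'(1) by (simp add: cauchy_mult algebra_simps)
qed

lemma qp_neg_cls:
  assumes "cauchy s"
  shows "qp_neg p (cls s) = cls (\<lambda>k. - s k)"
  unfolding qp_neg_def
proof (rule Union_eq_member)
  show "Y = cls (\<lambda>k. - s k)" if "Y \<in> {padic_rel p `` {\<lambda>k. - s' k} | s'. s' \<in> cls s}" for Y
  proof -
    from that obtain s' where Y: "Y = padic_rel p `` {\<lambda>k. - s' k}" "s' \<in> cls s" by blast
    hence s': "cauchy s'" "null (\<lambda>k. - (s k - s' k))" unfolding mem_cls_iff null_minus by auto
    have "(\<lambda>k. - s k - - s' k) = (\<lambda>k. - (s k - s' k))" by auto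
    thus ?thesis
      unfolding Y(1) using s' by (intro Image_eq_cls[OF cauchy_minus[OF assms] cauchy_minus]) simp_all
  qed
  show "cls (\<lambda>k. - s k) \<in> {padic_rel p `` {\<lambda>k. - s' k} | s'. s' \<in> cls s}"
    using cls_self[OF assms] unfolding cls_def by blast
qed

lemma qp_pow_cls:
  assumes "cauchy s"
  shows "qp_pow p (cls s) i = cls (\<lambda>k. s k ^ i)"
proof (induction i)
  case 0
  show ?case unfolding qp_pow_def by (simp add: qp_of_rat_eq_cls)
next
  case (Suc i)
  have "qp_pow p (cls s) (Suc i) = qp_mult p (cls s) (qp_pow p (cls s) i)"
    unfolding qp_pow_def by simp
  thus ?case unfolding Suc using qp_mult_cls assms cauchy_power by simp
qed

lemma qp_val_cls_eq:
  assumes "cauchy s" "lim_vp_eq s v"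
  shows "qp_val p (cls s) = ereal (of_int v)"
proof -
  have "\<not> null s"
  proof
    assume "null s"
    hence "lim_vge s (v + 1)" unfolding null_iff_lim_vge ..
    with assms(2) have "\<forall>\<^sub>F k in sequentially. False" by eventually_elim (simp add: rat_vge_def)
    thus False by simp
  qed
  hence "cls s \<noteq> qp_of_rat p 0"
    unfolding qp_of_rat_eq_cls using cls_eq_iff[OF assms(1) cauchy_const] by simp
  moreover have "(THE w. \<exists>t\<in>cls s. \<exists>N. \<forall>k\<ge>N. t k \<noteq> 0 \<and> rat_vp p (t k) = w) = v"
  proof (rule the_equality)
    show "\<exists>t\<in>cls s. \<exists>N. \<forall>k\<ge>N. t k \<noteq> 0 \<and> rat_vp p (t k) = v"
      using assms cls_self unfolding eventually_sequentially by blast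
    show "w = v" if "\<exists>t\<in>cls s. \<exists>N. \<forall>k\<ge>N. t k \<noteq> 0 \<and> rat_vp p (t k) = w" for w
    proof -
      from that obtain t N where t: "t \<in> cls s" "\<forall>k\<ge>N. t k \<noteq> 0 \<and> rat_vp p (t k) = w" by blast
      hence "lim_vp_eq t w" unfolding eventually_sequentially by blast
      with t(1) assms(2) show ?thesis using lim_vp_eq_unique[of s t v w] unfolding mem_cls_iff by simp
    qed
  qed
  ultimately show ?thesis unfolding qp_val_def by simp
qed

lemma qp_val_cls_null: "cauchy s \<Longrightarrow> null s \<Longrightarrow> qp_val p (cls s) = \<infinity>"
  unfolding qp_val_def qp_of_rat_eq_cls using cls_eq_iff[OF _ cauchy_const] by simp

lemma qp_val_cls_ge_iff:
  assumes "cauchy s"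
  shows "ereal (of_int n) \<le> qp_val p (cls s) \<longleftrightarrow> lim_vge s n"
proof (cases "null s")
  case True
  thus ?thesis using qp_val_cls_null assms unfolding null_iff_lim_vge by simp
next
  case False
  then obtain v where v: "lim_vp_eq s v" using cauchy_lim_vp_eq assms by blast
  have "lim_vge s n \<longleftrightarrow> n \<le> v"
    using lim_vge_le_of_lim_vp_eq lim_vge_mono lim_vge_of_lim_vp_eq v by blast
  thus ?thesis using qp_val_cls_eq[OF assms v] by simp
qed

lemma qp_val_diff_cls_ge_iff:
  assumes "cauchy s" "cauchy t"
  shows "ereal (of_int n) \<le> qp_val p (qp_add p (cls s) (qp_neg p (cls t))) \<longleftrightarrow>
    lim_vge (\<lambda>k. s k - t k) n"
  using assms by (simp add: qp_neg_cls qp_add_cls cauchy_minus cauchy_diff qp_val_cls_ge_iff)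

definition qp_rep :: "qp \<Rightarrow> nat \<Rightarrow> rat" where
  "qp_rep z = (SOME s. cauchy s \<and> z = cls s)"

lemma qp_rep:
  assumes "z \<in> Qp p"
  shows "cauchy (qp_rep z)" "cls (qp_rep z) = z"
proof -
  have "\<exists>s. cauchy s \<and> z = cls s" using Qp_obtain_cls[OF assms] by metis
  from someI_ex[OF this] show "cauchy (qp_rep z)" "cls (qp_rep z) = z"
    unfolding qp_rep_def by simp_all
qed

definition seq_continuous :: "('a::topological_space \<Rightarrow> nat \<Rightarrow> rat) \<Rightarrow> bool" where
  "seq_continuous A \<longleftrightarrow>
     (\<forall>x K. \<exists>U. open U \<and> x \<in> U \<and> (\<forall>y\<in>U. lim_vge (\<lambda>k. A y k - A x k) K))"

lemma qp_continuous_in_Qp: "qp_continuous p f \<Longrightarrow> f x \<in> Qp p"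
  unfolding qp_continuous_def by blast

lemma qp_continuous_cls_iff:
  assumes "\<And>x. cauchy (A x)"
  shows "qp_continuous p (\<lambda>x. cls (A x)) \<longleftrightarrow> seq_continuous A"
  unfolding qp_continuous_def seq_continuous_def
  using assms by (simp add: cls_in_Qp qp_val_diff_cls_ge_iff)

lemma qp_val_cls_le_iff:
  assumes "cauchy a" "cauchy b"
  shows "qp_val p (cls b) \<le> qp_val p (cls a) \<longleftrightarrow> (\<forall>n. lim_vge b n \<longrightarrow> lim_vge a n)"
  by (simp add: ereal_le_iff_of_int_le[OF qp_val_cases] qp_val_cls_ge_iff assms)

section \<open>Hensel's lemma for \<open>q\<close>-th roots\<close>

lemma vge_power_diff:
  assumes "vge r m" "vge r' m" "vge (r' - r) K"
  shows "vge (r' ^ Suc i - r ^ Suc i) (K + int i * m)"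
proof (induction i)
  case (Suc i)
  have "vge (r' * (r' ^ Suc i - r ^ Suc i)) (K + int (Suc i) * m)"
    using vge_mult[OF assms(2) Suc] by (simp add: algebra_simps)
  moreover have "vge (r ^ Suc i * (r' - r)) (K + int (Suc i) * m)"
    using vge_mult[OF vge_power[OF assms(1), where k = "Suc i"] assms(3)] by (simp add: algebra_simps)
  ultimately show ?case using vge_add by (fastforce simp: algebra_simps)
qed (use assms in simp)

lemma power_diff_factor:
  assumes "vge r m" "vge (r' - r) (m + 1)"
  obtains E where "vge E (int i * m + 1)"
    "r' ^ Suc i - r ^ Suc i = (r' - r) * (of_nat (Suc i) * r ^ i + E)"
proof (induction i arbitrary: thesis)
  case 0
  show ?case by (rule 0[of 0]) simp_all
next
  case (Suc i)
  obtain E where E: "vge E (int i * m + 1)"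
    "r' ^ Suc i - r ^ Suc i = (r' - r) * (of_nat (Suc i) * r ^ i + E)"
    using Suc.IH by blast
  have r': "vge r' m" using vge_add[OF assms(1) vge_mono[OF assms(2)]] by simp
  define E' where "E' = of_nat (Suc i) * r ^ i * (r' - r) + r' * E"
  have "vge (of_nat (Suc i) * r ^ i * (r' - r)) (int (Suc i) * m + 1)"
    using vge_mult[OF vge_mult[OF vge_of_nat[of "Suc i"] vge_power[OF assms(1), where k = i]] assms(2)]
    by (simp add: algebra_simps)
  moreover have "vge (r' * E) (int (Suc i) * m + 1)"
    using vge_mult[OF r' E(1)] by (simp add: algebra_simps)
  ultimately have "vge E' (int (Suc i) * m + 1)"
    unfolding E'_def by (rule vge_add)
  moreover have "r' ^ Suc (Suc i) - r ^ Suc (Suc i) = r' * (r' ^ Suc i - r ^ Suc i) + r ^ Suc i * (r' - r)"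
    by (simp add: algebra_simps)
  hence "r' ^ Suc (Suc i) - r ^ Suc (Suc i) = (r' - r) * (of_nat (Suc (Suc i)) * r ^ Suc i + E')"
    unfolding E(2) E'_def by (simp add: algebra_simps)
  ultimately show ?case by (rule Suc.prems)
qed

lemma power_add_expansion:
  assumes "vge r 0" "vge d 0"
  obtains E where "vge E 0" "(r + d) ^ Suc i = r ^ Suc i + of_nat (Suc i) * r ^ i * d + d\<^sup>2 * E"
proof (induction i arbitrary: thesis)
  case 0
  show ?case by (rule 0[of 0]) simp_all
next
  case (Suc i)
  obtain E where E: "vge E 0" "(r + d) ^ Suc i = r ^ Suc i + of_nat (Suc i) * r ^ i * d + d\<^sup>2 * E"
    using Suc.IH by blast
  define E' where "E' = r * E + of_nat (Suc i) * r ^ i + d * E"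
  have "vge (r * E) 0" "vge (d * E) 0"
    using vge_mult[OF assms(1) E(1)] vge_mult[OF assms(2) E(1)] by simp_all
  moreover have "vge (of_nat (Suc i) * r ^ i) 0"
    using vge_mult[OF vge_of_nat[of "Suc i"] vge_power[OF assms(1), where k = i]] by simp
  ultimately have "vge E' 0" unfolding E'_def by (intro vge_add)
  moreover have "(r + d) ^ Suc (Suc i) = (r + d) * (r ^ Suc i + of_nat (Suc i) * r ^ i * d + d\<^sup>2 * E)"
    using E(2) by simp
  hence "(r + d) ^ Suc (Suc i) = r ^ Suc (Suc i) + of_nat (Suc (Suc i)) * r ^ Suc i * d + d\<^sup>2 * E'"
    unfolding E'_def by (simp add: algebra_simps power2_eq_square)
  ultimately show ?case by (rule Suc.prems)
qed

lemma vge_power_minus_1: "vge (r - 1) 1 \<Longrightarrow> vge (r ^ i - 1) 1"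
proof (induction i)
  case (Suc i)
  have "vge (r * (r ^ i - 1) + (r - 1)) (0 + 1)"
    using vge_add vge_mult[OF vge_0_of_vge_diff_1 Suc.IH] Suc.prems by simp
  thus ?case by (simp add: algebra_simps)
qed simp

end

locale padic_q = padic +
  fixes q :: nat
  assumes q_ge_2: "2 \<le> q" and p_not_dvd_q: "\<not> p dvd q"
begin

lemma rat_vp_q: "rat_vp p (of_nat q) = 0"
  using rat_vp_of_nat_coprime p_not_dvd_q by blast

lemma q_obtain_Suc:
  obtains i where "q = Suc i"
  using q_ge_2 by (cases q) auto

text \<open>Uniqueness half of Hensel's lemma: as \<open>p\<close> does not divide \<open>q\<close>, near \<open>r \<noteq> 0\<close> the map
  \<open>r \<mapsto> r\<^sup>q\<close> raises valuations of differences by exactly \<open>(q - 1) v\<^sub>p(r)\<close>.\<close>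
lemma vge_diff_of_vge_power_diff:
  assumes "r \<noteq> 0" "vge (r' - r) (rat_vp p r + 1)" "vge (r' ^ q - r ^ q) K"
  shows "vge (r' - r) (K - int (q - 1) * rat_vp p r)"
proof (cases "r' = r")
  case False
  define m where "m = rat_vp p r"
  obtain i where q: "q = Suc i" by (rule q_obtain_Suc)
  obtain E where E: "vge E (int i * m + 1)"
    "r' ^ Suc i - r ^ Suc i = (r' - r) * (of_nat (Suc i) * r ^ i + E)"
    using power_diff_factor[of r m r' i] assms vge_rat_vp unfolding m_def by blast
  have nz: "of_nat (Suc i) * r ^ i \<noteq> 0" and vp: "rat_vp p (of_nat (Suc i) * r ^ i) = int i * m"
    using assms(1) q rat_vp_q rat_vp_mult rat_vp_power unfolding m_def by auto
  with E(1) rat_vp_add_eq[OF nz] have "of_nat (Suc i) * r ^ i + E \<noteq> 0"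
      "rat_vp p (of_nat (Suc i) * r ^ i + E) = int i * m"
    by auto
  moreover have "vge ((r' - r) * (of_nat (Suc i) * r ^ i + E)) K"
    using assms(3) E(2) q by simp
  ultimately have "K \<le> rat_vp p (r' - r) + int i * m"
    using False rat_vp_mult unfolding rat_vge_def by auto
  thus ?thesis unfolding rat_vge_def m_def q by simp
qed simp

text \<open>Existence half of Hensel's lemma, as successive Newton approximations
  \<open>r \<mapsto> r - (r\<^sup>q - X) / q\<close>; each step gains at least one digit of precision.\<close>
lemma approx_qth_root:
  assumes "vge (X - 1) 1"
  obtains r where "vge (r - 1) 1" "vge (r ^ q - X) (int k + 1)"
proof (induction k arbitrary: thesis)
  case 0
  show ?case by (rule 0[of 1]) (use assms in \<open>simp_all add: vge_diff_commute\<close>)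
next
  case (Suc k)
  obtain r where r: "vge (r - 1) 1" "vge (r ^ q - X) (int k + 1)" using Suc.IH by blast
  obtain i where q: "q = Suc i" by (rule q_obtain_Suc)
  define d where "d = (r ^ q - X) / of_nat q"
  have d: "vge d (int k + 1)"
    unfolding d_def using vge_divide[OF r(2), of "of_nat q"] rat_vp_q q_ge_2 by simp
  have "vge (- d) 0" using vge_mono[OF d] by simp
  then obtain E where E: "vge E 0"
    "(r + - d) ^ Suc i = r ^ Suc i + of_nat (Suc i) * r ^ i * (- d) + (- d)\<^sup>2 * E"
    using power_add_expansion[OF vge_0_of_vge_diff_1[OF r(1)]] by blast
  have X: "X = r ^ Suc i - of_nat (Suc i) * d"
    unfolding d_def q by simp
  have "(r - d) ^ q - X = (r ^ q - X) * (- (r ^ i - 1)) + d\<^sup>2 * E"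
    using E(2) unfolding q X by (simp add: algebra_simps)
  moreover have "vge (- (r ^ i - 1)) 1" by (simp only: vge_minus vge_power_minus_1[OF r(1)])
  from vge_mult[OF r(2) this] have "vge ((r ^ q - X) * (- (r ^ i - 1))) (int (Suc k) + 1)"
    by (simp add: add.commute)
  moreover have "vge (d\<^sup>2 * E) ((int k + 1) + (int k + 1) + 0)"
    using vge_mult[OF vge_mult[OF d d] E(1)] by (simp add: power2_eq_square)
  hence "vge (d\<^sup>2 * E) (int (Suc k) + 1)" by (rule vge_mono) simp
  ultimately have "vge ((r - d) ^ q - X) (int (Suc k) + 1)" by (simp add: vge_add)
  moreover have "vge (r - d - 1) 1"
    using vge_diff[OF r(1) vge_mono[OF d]] by (simp add: algebra_simps)
  ultimately show ?case using Suc.prems by blast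
qed

section \<open>Roots of \<open>g\<^sup>q + p f\<^sup>q\<close>\<close>

abbreviation qform :: "rat \<Rightarrow> rat \<Rightarrow> rat" where
  "qform a b \<equiv> b ^ q + of_nat p * a ^ q"

abbreviation qp_qform :: "qp \<Rightarrow> qp \<Rightarrow> qp" where
  "qp_qform x y \<equiv> qp_add p (qp_pow p y q) (qp_mult p (qp_of_rat p (of_nat p)) (qp_pow p x q))"

text \<open>If \<open>v\<^sub>p(b) > v\<^sub>p(a)\<close>, then \<open>b\<^sup>q + p a\<^sup>q\<close> has valuation \<open>q v\<^sub>p(a) + 1\<close>,
  which is not divisible by \<open>q\<close>; hence it is not a \<open>q\<close>-th power even up to higher order terms.\<close>
lemma qform_not_approx_qth_power:
  assumes "a \<noteq> 0" "vge b (rat_vp p a + 1)" "vge (c ^ q - qform a b) (int q * rat_vp p a + 2)"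
  shows False
proof -
  define v where "v = rat_vp p a"
  have x: "of_nat p * a ^ q \<noteq> 0" "rat_vp p (of_nat p * a ^ q) = int q * v + 1"
    using assms(1) prime_p rat_vp_mult rat_vp_power rat_vp_p unfolding v_def by auto
  have "int q * v + 2 \<le> int q * (v + 1)" using q_ge_2 by (simp add: algebra_simps)
  hence "vge (b ^ q) (int q * v + 2)"
    using vge_power[OF assms(2)] vge_mono unfolding v_def by blast
  hence "vge (b ^ q + (c ^ q - qform a b)) (int q * v + 2)"
    using assms(3) unfolding v_def by (rule vge_add)
  hence "vge (c ^ q - of_nat p * a ^ q) (rat_vp p (of_nat p * a ^ q) + 1)"
    using x(2) by (simp add: algebra_simps)
  from rat_vp_add_eq[OF x(1) this] x(2)
  have "c ^ q \<noteq> 0" "rat_vp p (c ^ q) = int q * v + 1" by simp_all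
  moreover from this have "c \<noteq> 0" using q_ge_2 by auto
  ultimately have "int q * (rat_vp p c - v) = 1" using rat_vp_power by (simp add: algebra_simps)
  thus False using q_ge_2 pos_zmult_eq_1_iff[of "int q"] by simp
qed

lemma vge_qth_root_of_qform:
  assumes "K \<ge> 0" "vge a K" "vge b K" "vge (c ^ q - qform a b) (int q * K)"
  shows "vge c K"
proof (rule vge_of_vge_power)
  have "vge (of_nat p * a ^ q) (int q * K)" "vge (b ^ q) (int q * K)"
    using vge_of_nat_p_mult vge_power assms by blast+
  hence "vge ((c ^ q - qform a b) + b ^ q + of_nat p * a ^ q) (int q * K)"
    using assms(4) by (intro vge_add)
  thus "vge (c ^ q) (int q * K)" by simp
qed (use q_ge_2 in simp)

text \<open>The root of \<open>b\<^sup>q + p a\<^sup>q\<close> near \<open>b\<close> depends continuously on \<open>(a, b)\<close>; the extra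
  \<open>(q - 1) m\<close> of precision in the defining equations is what the uniqueness half of Hensel's
  lemma consumes.\<close>
lemma vge_diff_qth_roots_of_qform:
  assumes "b' \<noteq> 0" "rat_vp p b' = m" "m + 1 \<le> K"
    and "vge (b - b') K" "vge (a - a') K" "vge a m" "vge a' m"
    and "vge (c - b) (m + 1)" "vge (c' - b') (m + 1)"
    and "vge (c ^ q - qform a b) (K + int (q - 1) * m)"
    and "vge (c' ^ q - qform a' b') (K + int (q - 1) * m)"
  shows "vge (c - c') K"
proof -
  define L where "L = K + int (q - 1) * m"
  obtain i where q: "q = Suc i" by (rule q_obtain_Suc)
  have b': "vge b' m" using vge_rat_vp assms(1,2) by blast
  have "vge (b' + (b - b')) m" using vge_add[OF b' vge_mono[OF assms(4)]] assms(3) by simp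
  hence bq: "vge (b ^ q - b' ^ q) L" unfolding L_def q using vge_power_diff[OF b' _ assms(4)] by simp
  have "vge (a ^ q - a' ^ q) L"
    unfolding L_def q using vge_power_diff[OF assms(7,6,5)] by simp
  hence aq: "vge (of_nat p * (a ^ q - a' ^ q)) L" by (rule vge_of_nat_p_mult)
  have "vge ((c ^ q - qform a b) - (c' ^ q - qform a' b')) L"
    using vge_diff[OF assms(10,11)] unfolding L_def .
  from vge_add[OF vge_add[OF this bq] aq] have "vge (c ^ q - c' ^ q) L"
    by (simp add: algebra_simps)
  moreover have c': "c' \<noteq> 0" "rat_vp p c' = m"
    using rat_vp_add_eq[of b' "c' - b'"] assms(1,2,9) by auto
  moreover have "vge ((c - b) + (b - b') - (c' - b')) (m + 1)"
    using vge_diff[OF vge_add[OF assms(8) vge_mono[OF assms(4,3)]] assms(9)] .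
  hence "vge (c - c') (rat_vp p c' + 1)" using c' by simp
  ultimately show ?thesis
    using vge_diff_of_vge_power_diff[of c' c L] by (simp add: L_def vge_diff_commute)
qed

lemma approx_roots_cauchy:
  assumes "cauchy X" "\<forall>\<^sub>F k in sequentially. vge (R k - 1) 1 \<and> vge (R k ^ q - X k) (int k)"
  shows "cauchy R"
  unfolding padic_cauchy_def
proof
  fix n
  obtain M where M: "\<forall>k\<ge>M. vge (R k - 1) 1 \<and> vge (R k ^ q - X k) (int k)"
    using assms(2) unfolding eventually_sequentially by blast
  obtain N where N: "\<forall>k\<ge>N. \<forall>l\<ge>N. vge (X k - X l) n"
    using assms(1) unfolding padic_cauchy_def by blast
  have "vge (R k - R l) n" if "k \<ge> max (max M N) (nat n)" "l \<ge> max (max M N) (nat n)" for k l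
  proof -
    have R: "vge (R k - 1) 1" "vge (R l - 1) 1" "vge (R k ^ q - X k) n" "vge (R l ^ q - X l) n"
      using M that by (auto intro: vge_mono)
    have "vge ((R k ^ q - X k) + (X k - X l) - (R l ^ q - X l)) n"
      using R N that by (intro vge_diff[OF vge_add[OF R(3)] R(4)]) auto
    hence "vge (R k ^ q - R l ^ q) n" by simp
    moreover have "R l \<noteq> 0" "rat_vp p (R l) = 0"
      using rat_vp_add_eq[of 1 "R l - 1"] R(2) rat_vp_1 by simp_all
    moreover have "vge (R k - R l) (0 + 1)" using vge_diff[OF R(1,2)] by simp
    ultimately show ?thesis using vge_diff_of_vge_power_diff[of "R l" "R k" n] by simp
  qed
  thus "\<exists>N. \<forall>k\<ge>N. \<forall>l\<ge>N. vge (R k - R l) n" by blast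
qed

text \<open>For \<open>b\<close> with eventually constant valuation, the root is \<open>b\<close> times a \<open>q\<close>-th root of
  the principal unit \<open>1 + p (a/b)\<^sup>q\<close>, approximated to precision \<open>k\<close> at index \<open>k\<close>.\<close>
lemma seq_qth_root:
  assumes "cauchy a" "cauchy b" "\<And>n. lim_vge b n \<Longrightarrow> lim_vge a n"
  obtains c where "cauchy c" "null (\<lambda>k. c k ^ q - qform (a k) (b k))"
    "\<And>n. lim_vge b n \<Longrightarrow> lim_vge (\<lambda>k. c k - b k) (n + 1)"
proof (cases "null b")
  case True
  hence "null a" using assms(3) unfolding null_iff_lim_vge by blast
  hence "null (\<lambda>k. a k ^ q * of_nat p)" using null_power q_ge_2 by (intro null_mult[where B = 0]) auto
  hence "null (\<lambda>k. - (b k ^ q + a k ^ q * of_nat p))"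
    using True null_power q_ge_2 unfolding null_minus by (intro null_add) auto
  moreover have "(\<lambda>k. 0 ^ q - qform (a k) (b k)) = (\<lambda>k. - (b k ^ q + a k ^ q * of_nat p))"
    using q_ge_2 by (simp add: fun_eq_iff power_0_left algebra_simps)
  ultimately have "null (\<lambda>k. 0 ^ q - qform (a k) (b k))" by simp
  moreover have "lim_vge (\<lambda>k. 0 - b k) (n + 1)" for n
    using True unfolding null_iff_lim_vge by simp
  ultimately show ?thesis using that cauchy_const by blast
next
  case False
  then obtain m where m: "lim_vp_eq b m" using cauchy_lim_vp_eq assms(2) by blast
  define X where "X k = 1 + of_nat p * (a k * inverse (b k)) ^ q" for k
  have "cauchy X"
    unfolding X_def using assms(1,2) cauchy_inverse[OF assms(2) m]
    by (intro cauchy_add cauchy_const cauchy_mult cauchy_power)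
  have X1: "\<forall>\<^sub>F k in sequentially. vge (X k - 1) 1"
    using m assms(3)[OF lim_vge_of_lim_vp_eq[OF m]]
  proof eventually_elim
    case (elim k)
    hence "vge (a k / b k) 0" using vge_divide[of "a k" m "b k"] by simp
    from vge_mult[OF vge_p vge_power[OF this, of q]] show ?case
      unfolding X_def by (simp add: divide_inverse)
  qed
  have "\<forall>k. \<exists>r. vge (X k - 1) 1 \<longrightarrow> vge (r - 1) 1 \<and> vge (r ^ q - X k) (int k + 1)"
  proof
    fix k
    show "\<exists>r. vge (X k - 1) 1 \<longrightarrow> vge (r - 1) 1 \<and> vge (r ^ q - X k) (int k + 1)"
      using approx_qth_root[of "X k" k] by blast
  qed
  from choice[OF this] obtain R
    where R: "\<And>k. vge (X k - 1) 1 \<Longrightarrow> vge (R k - 1) 1 \<and> vge (R k ^ q - X k) (int k + 1)"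
    by blast
  have ev_R: "\<forall>\<^sub>F k in sequentially. vge (R k - 1) 1 \<and> vge (R k ^ q - X k) (int k + 1)"
    using X1 by (rule eventually_mono) (rule R)
  define c where "c k = b k * R k" for k
  have "\<forall>\<^sub>F k in sequentially. vge (R k - 1) 1 \<and> vge (R k ^ q - X k) (int k)"
    using ev_R by (rule eventually_mono) (auto elim: vge_mono)
  with \<open>cauchy X\<close> have "cauchy R" by (rule approx_roots_cauchy)
  hence "cauchy c" unfolding c_def using cauchy_mult[OF assms(2)] by blast
  moreover have "lim_vge (\<lambda>k. c k ^ q - qform (a k) (b k)) n" for n
    using m ev_R eventually_ge_at_top[of "nat (n - int q * m)"]
  proof eventually_elim
    case (elim k)
    hence "c k ^ q - qform (a k) (b k) = b k ^ q * (R k ^ q - X k)"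
      unfolding c_def X_def by (simp add: field_simps)
    moreover have "vge (b k ^ q * (R k ^ q - X k)) (int q * m + (int k + 1))"
      using elim vge_rat_vp by (intro vge_mult vge_power) auto
    ultimately show ?case using elim vge_mono[of _ "int q * m + (int k + 1)" n] by simp
  qed
  moreover have "lim_vge (\<lambda>k. c k - b k) (n + 1)" if "lim_vge b n" for n
  proof -
    have "n \<le> m" using lim_vge_le_of_lim_vp_eq[OF m that] .
    from m ev_R show ?thesis
    proof eventually_elim
      case (elim k)
      hence "vge (b k * (R k - 1)) (m + 1)" using vge_rat_vp by (intro vge_mult) auto
      from vge_mono[OF this, of "n + 1"] show ?case
        using \<open>n \<le> m\<close> unfolding c_def by (simp add: algebra_simps)
    qed
  qed
  ultimately show ?thesis using that unfolding null_iff_lim_vge by blast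
qed

lemma lim_vge_of_qth_root:
  assumes "cauchy a" "null (\<lambda>k. c k ^ q - qform (a k) (b k))" "lim_vge b n"
  shows "lim_vge a n"
proof (rule ccontr)
  assume not_ge: "\<not> lim_vge a n"
  hence "\<not> null a" unfolding null_iff_lim_vge by blast
  then obtain v where v: "lim_vp_eq a v" using cauchy_lim_vp_eq assms(1) by blast
  have "v + 1 \<le> n"
  proof (rule ccontr)
    assume "\<not> v + 1 \<le> n"
    thus False using not_ge lim_vge_mono[OF lim_vge_of_lim_vp_eq[OF v], of n] by simp
  qed
  have "lim_vge (\<lambda>k. c k ^ q - qform (a k) (b k)) (int q * v + 2)"
    using assms(2) unfolding null_iff_lim_vge by blast
  with v assms(3) have "\<forall>\<^sub>F k in sequentially. False"
  proof eventually_elim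
    case (elim k)
    show False
      by (rule qform_not_approx_qth_power[of "a k" "b k" "c k"])
        (use elim vge_mono[of "b k" n "v + 1"] \<open>v + 1 \<le> n\<close> in auto)
  qed
  thus False by simp
qed

lemma seq_continuousE:
  assumes "seq_continuous A"
  obtains U where "open U" "x \<in> U" "\<And>y. y \<in> U \<Longrightarrow> lim_vge (\<lambda>k. A y k - A x k) K"
proof -
  have "\<exists>U. open U \<and> x \<in> U \<and> (\<forall>y\<in>U. lim_vge (\<lambda>k. A y k - A x k) K)"
    using assms unfolding seq_continuous_def by simp
  then obtain U where "open U" "x \<in> U" "\<forall>y\<in>U. lim_vge (\<lambda>k. A y k - A x k) K"
    by (elim exE conjE)
  thus ?thesis using that by simp
qed

lemma seq_continuous_lim_vge:
  assumes "seq_continuous A" "lim_vge (A x) K"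
  obtains U where "open U" "x \<in> U" "\<And>y. y \<in> U \<Longrightarrow> lim_vge (A y) K"
proof -
  obtain U where U: "open U" "x \<in> U" "\<And>y. y \<in> U \<Longrightarrow> lim_vge (\<lambda>k. A y k - A x k) K"
    using seq_continuousE[OF assms(1), where x = x and K = K] by blast
  show ?thesis
  proof (rule that[OF U(1,2)])
    fix y assume "y \<in> U"
    from lim_vge_add[OF U(3)[OF this] assms(2)] show "lim_vge (A y) K" by simp
  qed
qed

lemma qp_qform_cls:
  assumes "cauchy a" "cauchy b"
  shows "qp_qform (cls a) (cls b) = cls (\<lambda>k. qform (a k) (b k))"
  using assms
  by (simp add: qp_pow_cls qp_of_rat_eq_cls qp_mult_cls qp_add_cls cauchy_power cauchy_const cauchy_mult)

lemma qp_pow_cls_eq_qp_qform_iff: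
  assumes "cauchy a" "cauchy b" "cauchy c"
  shows "qp_pow p (cls c) q = qp_qform (cls a) (cls b) \<longleftrightarrow> null (\<lambda>k. c k ^ q - qform (a k) (b k))"
  unfolding qp_qform_cls[OF assms(1,2)] qp_pow_cls[OF assms(3)]
  using assms by (simp add: cls_eq_iff cauchy_power cauchy_add cauchy_mult cauchy_const)

lemma qp_val_le_of_qth_root:
  assumes "x \<in> Qp p" "y \<in> Qp p" "z \<in> Qp p" "qp_pow p z q = qp_qform x y"
  shows "qp_val p y \<le> qp_val p x"
proof -
  obtain a b c where abc: "cauchy a" "cauchy b" "cauchy c" and "x = cls a" "y = cls b" "z = cls c"
    using Qp_obtain_cls assms(1-3) by metis
  hence "null (\<lambda>k. c k ^ q - qform (a k) (b k))"
    using assms(4) qp_pow_cls_eq_qp_qform_iff[OF abc] by simp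
  hence "\<forall>n. lim_vge b n \<longrightarrow> lim_vge a n" using lim_vge_of_qth_root[OF abc(1)] by blast
  thus ?thesis
    unfolding \<open>x = cls a\<close> \<open>y = cls b\<close> using qp_val_cls_le_iff[OF abc(1,2)] by simp
qed

end

section \<open>Continuity of the root\<close>

locale qth_root_family = padic_q +
  fixes A B C :: "'a::topological_space \<Rightarrow> nat \<Rightarrow> rat"
  assumes continuous_A: "seq_continuous A" and continuous_B: "seq_continuous B"
    and cauchy_B: "\<And>x. cauchy (B x)"
    and dvd: "\<And>x n. lim_vge (B x) n \<Longrightarrow> lim_vge (A x) n"
    and root: "\<And>x. null (\<lambda>k. C x k ^ q - qform (A x k) (B x k))"
    and root_near_B: "\<And>x n. lim_vge (B x) n \<Longrightarrow> lim_vge (\<lambda>k. C x k - B x k) (n + 1)"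
begin

lemma continuous_C_at_null:
  assumes "null (B x)"
  obtains U where "open U" "x \<in> U" "\<And>y. y \<in> U \<Longrightarrow> lim_vge (\<lambda>k. C y k - C x k) K"
proof -
  define K' where "K' = max K 0"
  have "0 \<le> K'" "K \<le> K'" unfolding K'_def by auto
  have "lim_vge (A x) K'" "lim_vge (B x) K'" using assms dvd unfolding null_iff_lim_vge by blast+
  obtain U1 where U1: "open U1" "x \<in> U1" "\<And>y. y \<in> U1 \<Longrightarrow> lim_vge (A y) K'"
    using seq_continuous_lim_vge[OF continuous_A \<open>lim_vge (A x) K'\<close>] by blast
  obtain U2 where U2: "open U2" "x \<in> U2" "\<And>y. y \<in> U2 \<Longrightarrow> lim_vge (B y) K'"
    using seq_continuous_lim_vge[OF continuous_B \<open>lim_vge (B x) K'\<close>] by blast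
  have "lim_vge (\<lambda>k. C x k - B x k) (K' - 1 + 1)"
    using root_near_B[of x "K' - 1"] assms unfolding null_iff_lim_vge by blast
  from lim_vge_add[OF this[simplified] \<open>lim_vge (B x) K'\<close>] have Cx: "lim_vge (C x) K'" by simp
  show ?thesis
  proof (rule that[of "U1 \<inter> U2"])
    show "open (U1 \<inter> U2)" "x \<in> U1 \<inter> U2" using U1 U2 by auto
    fix y assume "y \<in> U1 \<inter> U2"
    hence "lim_vge (A y) K'" "lim_vge (B y) K'" using U1 U2 by auto
    moreover have "lim_vge (\<lambda>k. C y k ^ q - qform (A y k) (B y k)) (int q * K')"
      using root unfolding null_iff_lim_vge by blast
    ultimately show "lim_vge (\<lambda>k. C y k - C x k) K" using Cx
    proof eventually_elim
      case (elim k)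
      hence "vge (C y k) K'"
        using vge_qth_root_of_qform[of K' "A y k" "B y k" "C y k"] \<open>0 \<le> K'\<close> by blast
      from vge_diff[OF this] elim have "vge (C y k - C x k) K'" by blast
      thus ?case using \<open>K \<le> K'\<close> by (rule vge_mono)
    qed
  qed
qed

lemma continuous_C_at_lim_vp_eq:
  assumes m: "lim_vp_eq (B x) m"
  obtains U where "open U" "x \<in> U" "\<And>y. y \<in> U \<Longrightarrow> lim_vge (\<lambda>k. C y k - C x k) K"
proof -
  define K' where "K' = max K (m + 1)"
  have "m + 1 \<le> K'" "m \<le> K'" "K \<le> K'" unfolding K'_def by auto
  obtain U1 where U1: "open U1" "x \<in> U1" "\<And>y. y \<in> U1 \<Longrightarrow> lim_vge (\<lambda>k. A y k - A x k) K'"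
    using seq_continuousE[OF continuous_A, where x = x and K = K'] by blast
  obtain U2 where U2: "open U2" "x \<in> U2" "\<And>y. y \<in> U2 \<Longrightarrow> lim_vge (\<lambda>k. B y k - B x k) K'"
    using seq_continuousE[OF continuous_B, where x = x and K = K'] by blast
  have Bx: "lim_vge (B x) m" using lim_vge_of_lim_vp_eq[OF m] .
  show ?thesis
  proof (rule that[of "U1 \<inter> U2"])
    show "open (U1 \<inter> U2)" "x \<in> U1 \<inter> U2" using U1 U2 by auto
    fix y assume y: "y \<in> U1 \<inter> U2"
    have ABy: "lim_vge (\<lambda>k. A y k - A x k) K'" "lim_vge (\<lambda>k. B y k - B x k) K'"
      using y U1 U2 by auto
    have "lim_vge (\<lambda>k. (B y k - B x k) + B x k) m"
      using lim_vge_add[OF lim_vge_mono[OF ABy(2) \<open>m \<le> K'\<close>] Bx] .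
    hence By: "lim_vge (B y) m" by simp
    have "lim_vge (\<lambda>k. C y k ^ q - qform (A y k) (B y k)) (K' + int (q - 1) * m)"
      "lim_vge (\<lambda>k. C x k ^ q - qform (A x k) (B x k)) (K' + int (q - 1) * m)"
      using root unfolding null_iff_lim_vge by blast+
    with m ABy dvd[OF By] dvd[OF Bx] root_near_B[OF By] root_near_B[OF Bx]
    have "lim_vge (\<lambda>k. C y k - C x k) K'"
    proof eventually_elim
      case (elim k)
      show ?case
        by (rule vge_diff_qth_roots_of_qform[where b' = "B x k" and b = "B y k" and a = "A y k"
              and a' = "A x k" and m = m]) (use elim \<open>m + 1 \<le> K'\<close> in blast)+
    qed
    thus "lim_vge (\<lambda>k. C y k - C x k) K" using \<open>K \<le> K'\<close> by (rule lim_vge_mono)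
  qed
qed

lemma seq_continuous_C: "seq_continuous C"
  unfolding seq_continuous_def
proof (intro allI)
  fix x K
  obtain U where "open U" "x \<in> U" "\<And>y. y \<in> U \<Longrightarrow> lim_vge (\<lambda>k. C y k - C x k) K"
  proof (cases "null (B x)")
    case False
    then obtain m where "lim_vp_eq (B x) m" using cauchy_lim_vp_eq cauchy_B by blast
    thus ?thesis using continuous_C_at_lim_vp_eq that by blast
  qed (use continuous_C_at_null in blast)
  thus "\<exists>U. open U \<and> x \<in> U \<and> (\<forall>y\<in>U. lim_vge (\<lambda>k. C y k - C x k) K)" by blast
qed

end

context padic_q
begin

lemma qp_continuous_qth_root:
  assumes "qp_continuous p f" "qp_continuous p g" "\<And>x. qp_val p (g x) \<le> qp_val p (f x)"
  obtains h where "qp_continuous p h" "\<And>x. qp_pow p (h x) q = qp_qform (f x) (g x)"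
proof -
  define A B where "A x = qp_rep (f x)" and "B x = qp_rep (g x)" for x
  have "f x \<in> Qp p" "g x \<in> Qp p" for x using assms(1,2) by (simp_all add: qp_continuous_in_Qp)
  hence AB: "cauchy (A x)" "cauchy (B x)" and fg: "f = (\<lambda>x. cls (A x))" "g = (\<lambda>x. cls (B x))"
    for x using qp_rep unfolding A_def B_def by auto
  have dvd: "lim_vge (B x) n \<Longrightarrow> lim_vge (A x) n" for x n
    using assms(3)[of x] qp_val_cls_le_iff[OF AB] unfolding fg by blast
  have "\<forall>x. \<exists>c. cauchy c \<and> null (\<lambda>k. c k ^ q - qform (A x k) (B x k)) \<and>
      (\<forall>n. lim_vge (B x) n \<longrightarrow> lim_vge (\<lambda>k. c k - B x k) (n + 1))"
  proof
    fix x
    obtain c where "cauchy c" "null (\<lambda>k. c k ^ q - qform (A x k) (B x k))"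
      "\<And>n. lim_vge (B x) n \<Longrightarrow> lim_vge (\<lambda>k. c k - B x k) (n + 1)"
      using seq_qth_root[OF AB(1)[of x] AB(2)[of x] dvd] by blast
    thus "\<exists>c. cauchy c \<and> null (\<lambda>k. c k ^ q - qform (A x k) (B x k)) \<and>
      (\<forall>n. lim_vge (B x) n \<longrightarrow> lim_vge (\<lambda>k. c k - B x k) (n + 1))" by blast
  qed
  from choice[OF this] obtain C where C: "\<And>x. cauchy (C x)"
    "\<And>x. null (\<lambda>k. C x k ^ q - qform (A x k) (B x k))"
    "\<And>x n. lim_vge (B x) n \<Longrightarrow> lim_vge (\<lambda>k. C x k - B x k) (n + 1)"
    by blast
  have "seq_continuous A" "seq_continuous B"
    using assms(1,2) qp_continuous_cls_iff[of A] qp_continuous_cls_iff[of B] AB unfolding fg by simp_all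
  then interpret qth_root_family p q A B C
    using AB dvd C q_ge_2 p_not_dvd_q prime_p by unfold_locales
  show ?thesis
  proof (rule that[of "\<lambda>x. cls (C x)"])
    show "qp_continuous p (\<lambda>x. cls (C x))"
      using qp_continuous_cls_iff[of C] C(1) seq_continuous_C by simp
    show "qp_pow p (cls (C x)) q = qp_qform (f x) (g x)" for x
      unfolding fg using qp_pow_cls_eq_qp_qform_iff[OF AB(1)[of x] AB(2)[of x] C(1)[of x]] C(2)[of x]
      by simp
  qed
qed

end


theorem proposition4p7:
  fixes p q :: nat and f g :: "'a::topological_space \<Rightarrow> qp"
  assumes "prime p" and "compact (UNIV :: 'a set)"
    and "prime q" and "q \<noteq> p"
    and "qp_continuous p f" and "qp_continuous p g"
  shows "padic_dvd_star p g f \<longleftrightarrow>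
    (\<exists>h :: 'a \<Rightarrow> qp. qp_continuous p h \<and>
       (\<forall>x. qp_pow p (h x) q =
             qp_add p (qp_pow p (g x) q) (qp_mult p (qp_of_rat p (of_nat p)) (qp_pow p (f x) q))))"
proof -
  interpret padic_q p q
    using assms(1,3,4) by unfold_locales (auto simp: prime_ge_2_nat dest: primes_dvd_imp_eq)
  show ?thesis
    unfolding padic_dvd_star_def
  proof
    assume "\<forall>x. qp_val p (g x) \<le> qp_val p (f x)"
    then obtain h where "qp_continuous p h" "\<And>x. qp_pow p (h x) q = qp_qform (f x) (g x)"
      using qp_continuous_qth_root[OF assms(5,6)] by blast
    thus "\<exists>h. qp_continuous p h \<and> (\<forall>x. qp_pow p (h x) q = qp_qform (f x) (g x))" by blast
  next
    assume "\<exists>h. qp_continuous p h \<and> (\<forall>x. qp_pow p (h x) q = qp_qform (f x) (g x))"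
    then obtain h where h: "qp_continuous p h" "\<And>x. qp_pow p (h x) q = qp_qform (f x) (g x)"
      by blast
    show "\<forall>x. qp_val p (g x) \<le> qp_val p (f x)"
      using qp_val_le_of_qth_root qp_continuous_in_Qp assms(5,6) h by blast
  qed
qed

end
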